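(* Let $G$ be a finite simple graph without isolated edges and without isolated triangles. Then the edges of $G$ can be colored with $a(G)$ colors so that each color class induces a forest without isolated edges.
   Context: The arboricity $a(G)$ is the least number of forests into which the edge set of $G$ can be decomposed. An isolated edge of a graph is a connected component isomorphic to $K_2$; an isolated triangle is a connected component isomorphic to $K_3$. A forest induced by a color class has no isolated edges if none of its components consists of a single edge. *)

theory Defs
  imports Main
begin

definition simple_graph :: "'a set \<Rightarrow> 'a set set \<Rightarrow> bool" where
  "simple_graph V E \<longleftrightarrow> finite V \<and>
     (\<forall>e\<in>E. \<exists>u v. u \<noteq> v \<and> u \<in> V \<and> v \<in> V \<and> e = {u, v})"

definition has_cycle :: "'a set set \<Rightarrow> bool" where
  "has_cycle F \<longleftrightarrow> (\<exists>vs. length vs \<ge> 3 \<and> distinct vs \<and>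
     (\<forall>i < length vs. {vs ! i, vs ! ((i + 1) mod length vs)} \<in> F))"

definition is_forest :: "'a set set \<Rightarrow> bool" where
  "is_forest F \<longleftrightarrow> \<not> has_cycle F"

definition arboricity :: "'a set set \<Rightarrow> nat" where
  "arboricity E = (LEAST k. \<exists>c :: 'a set \<Rightarrow> nat. (\<forall>e\<in>E. c e < k) \<and>
                      (\<forall>i<k. is_forest {e\<in>E. c e = i}))"

definition has_isolated_edge :: "'a set set \<Rightarrow> bool" where
  "has_isolated_edge E \<longleftrightarrow> (\<exists>e\<in>E. \<forall>e'\<in>E. e' \<noteq> e \<longrightarrow> e' \<inter> e = {})"

definition has_isolated_triangle :: "'a set set \<Rightarrow> bool" where
  "has_isolated_triangle E \<longleftrightarrow> (\<exists>a b c. a \<noteq> b \<and> b \<noteq> c \<and> a \<noteq> c \<and>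
     {a, b} \<in> E \<and> {b, c} \<in> E \<and> {a, c} \<in> E \<and>
     (\<forall>e\<in>E. e \<inter> {a, b, c} \<noteq> {} \<longrightarrow> e \<subseteq> {a, b, c}))"

end

(*
  Take a colouring of E by arboricity-many forests that minimises the number of edges isolated
  in their own colour class, and suppose e = {a, b} is such an edge.  Moving e into a class that
  contains a neighbour of e removes its isolation unless it closes a cycle; recolouring a
  neighbour f of e with the colour of e does so unless f is the only neighbour of some edge of
  its class.  When neither move helps, the cycle closed by e in a class j meeting e must be a
  triangle a-w-b whose path a-w-b is a whole component of class j.  Since {a, b}, {a, w}, {w, b}
  do not form an isolated triangle, an edge of some other class l touches {a, w, b}; moving e
  into class j and {a, w} into class l keeps all classes forests and strictly decreases the
  number of isolated edges.
*)
theory Submission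
  imports Defs
begin

definition is_cycle :: "'a set set \<Rightarrow> 'a list \<Rightarrow> bool" where
  "is_cycle F vs \<longleftrightarrow> length vs \<ge> 3 \<and> distinct vs \<and>
     (\<forall>i < length vs. {vs ! i, vs ! ((i + 1) mod length vs)} \<in> F)"

definition is_path :: "'a set set \<Rightarrow> 'a list \<Rightarrow> bool" where
  "is_path F ws \<longleftrightarrow> distinct ws \<and> (\<forall>k. Suc k < length ws \<longrightarrow> {ws ! k, ws ! Suc k} \<in> F)"

lemma is_forest_iff_no_cycle: "is_forest F \<longleftrightarrow> (\<forall>vs. \<not> is_cycle F vs)"
  unfolding is_forest_def has_cycle_def is_cycle_def by blast

lemma is_forest_subset: "is_forest F \<Longrightarrow> G \<subseteq> F \<Longrightarrow> is_forest G"
  unfolding is_forest_iff_no_cycle is_cycle_def by blast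

lemma is_forest_subsingleton:
  assumes "\<forall>x\<in>F. \<forall>y\<in>F. x = y"
  shows "is_forest F"
  unfolding is_forest_iff_no_cycle
proof (intro allI notI)
  fix vs assume "is_cycle F vs"
  then have vs: "length vs \<ge> 3" "distinct vs"
    and edges: "\<forall>i < length vs. {vs ! i, vs ! ((i + 1) mod length vs)} \<in> F"
    unfolding is_cycle_def by auto
  have len: "0 < length vs" "1 < length vs" "2 < length vs" using vs(1) by linarith+
  have "{vs ! 0, vs ! 1} \<in> F" "{vs ! 1, vs ! 2} \<in> F"
    using edges[rule_format, OF len(1)] edges[rule_format, OF len(2)] len by (simp_all add: numeral_2_eq_2)
  then have "{vs ! 0, vs ! 1} = {vs ! 1, vs ! 2}" by (rule assms[rule_format])
  moreover have "vs ! 0 \<noteq> vs ! 1" "vs ! 0 \<noteq> vs ! 2"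
    using vs(2) len by (simp_all add: nth_eq_iff_index_eq)
  ultimately show False by (auto simp: doubleton_eq_iff)
qed

lemma distinct_nth_doubleton_eq:
  assumes "distinct ws" "i < length ws" "j < length ws" "p < length ws" "q < length ws"
  shows "{ws ! i, ws ! j} = {ws ! p, ws ! q} \<longleftrightarrow> (i = p \<and> j = q \<or> i = q \<and> j = p)"
  using assms by (auto simp: doubleton_eq_iff nth_eq_iff_index_eq)

lemma is_cycle_rotate:
  assumes "is_cycle F vs"
  shows "is_cycle F (rotate m vs)"
proof -
  let ?n = "length vs"
  have n: "?n \<ge> 3" "distinct vs"
    and edges: "\<forall>i < ?n. {vs ! i, vs ! ((i + 1) mod ?n)} \<in> F"
    using assms unfolding is_cycle_def by auto
  have "{rotate m vs ! i, rotate m vs ! ((i + 1) mod ?n)} \<in> F" if i: "i < ?n" for i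
  proof -
    have "rotate m vs ! i = vs ! ((m + i) mod ?n)" using i by (simp add: nth_rotate)
    moreover have "rotate m vs ! ((i + 1) mod ?n) = vs ! ((m + (i + 1) mod ?n) mod ?n)"
      using n by (intro nth_rotate mod_less_divisor) linarith
    moreover have "(m + (i + 1) mod ?n) mod ?n = ((m + i) mod ?n + 1) mod ?n"
      by (simp add: mod_Suc_eq mod_add_right_eq)
    moreover have "(m + i) mod ?n < ?n" using n by (intro mod_less_divisor) linarith
    ultimately show ?thesis using edges by metis
  qed
  then show ?thesis using n unfolding is_cycle_def by simp
qed

lemma path_of_cycle_insert:
  assumes F: "is_forest F" and cycle: "\<not> is_forest (insert {a, b} F)"
  obtains ws where "length ws \<ge> 3" "is_path F ws" "{ws ! 0, ws ! (length ws - 1)} = {a, b}"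
proof -
  obtain vs where vs: "is_cycle (insert {a, b} F) vs"
    using cycle unfolding is_forest_iff_no_cycle by blast
  let ?n = "length vs"
  have n: "?n \<ge> 3" and edges: "\<forall>i < ?n. {vs ! i, vs ! ((i + 1) mod ?n)} \<in> insert {a, b} F"
    using vs unfolding is_cycle_def by auto
  have "\<not> is_cycle F vs" using F unfolding is_forest_iff_no_cycle by blast
  then have "\<not> (\<forall>i < ?n. {vs ! i, vs ! ((i + 1) mod ?n)} \<in> F)"
    using vs unfolding is_cycle_def by simp
  then obtain i where i: "i < ?n" "{vs ! i, vs ! ((i + 1) mod ?n)} \<notin> F" by blast
  then have closing: "{vs ! i, vs ! ((i + 1) mod ?n)} = {a, b}"
    using edges[rule_format, OF i(1)] by simp
  \<comment> \<open>rotate so that the missing edge joins the last vertex to the first\<close>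
  define ws where "ws = rotate (Suc i) vs"
  have ws: "is_cycle (insert {a, b} F) ws" "length ws = ?n"
    unfolding ws_def by (rule is_cycle_rotate[OF vs]) simp
  then have dist: "distinct ws"
    and ws_edges: "\<forall>k < ?n. {ws ! k, ws ! ((k + 1) mod ?n)} \<in> insert {a, b} F"
    unfolding is_cycle_def by auto
  have "ws ! (?n - 1) = vs ! ((Suc i + (?n - 1)) mod ?n)"
    unfolding ws_def using n by (intro nth_rotate) simp
  also have "Suc i + (?n - 1) = i + ?n" using n by linarith
  finally have last: "ws ! (?n - 1) = vs ! i" using i(1) by simp
  have "ws ! 0 = vs ! ((i + 1) mod ?n)"
    unfolding ws_def using n by (subst nth_rotate) auto
  with last closing have ends: "{ws ! 0, ws ! (?n - 1)} = {a, b}" by (simp add: insert_commute)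
  have "{ws ! k, ws ! Suc k} \<in> F" if k: "Suc k < ?n" for k
  proof (rule ccontr)
    assume "{ws ! k, ws ! Suc k} \<notin> F"
    with ws_edges k have "{ws ! k, ws ! Suc k} = {ws ! 0, ws ! (?n - 1)}"
      using ends by (metis Suc_eq_plus1 Suc_lessD insertE mod_less)
    then show False
      using distinct_nth_doubleton_eq[OF dist, of k "Suc k" 0 "?n - 1"] k n ws(2) by (cases vs) auto
  qed
  then show ?thesis
    using that[of ws] n ws(2) dist ends unfolding is_path_def by simp
qed

lemma is_forest_insert_pendant:
  assumes F: "is_forest F" and fresh: "\<forall>s\<in>F. a \<notin> s"
  shows "is_forest (insert {a, b} F)"
proof (rule ccontr)
  assume "\<not> ?thesis"
  then obtain ws where ws: "length ws \<ge> 3" "is_path F ws" "{ws ! 0, ws ! (length ws - 1)} = {a, b}"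
    by (rule path_of_cycle_insert[OF F])
  have "{ws ! 0, ws ! Suc 0} \<in> F" "{ws ! (length ws - 2), ws ! Suc (length ws - 2)} \<in> F"
    using ws(1,2) unfolding is_path_def by simp_all
  moreover have "Suc (length ws - 2) = length ws - 1" using ws(1) by simp
  moreover have "a \<in> {ws ! 0, ws ! (length ws - 1)}" using ws(3) by simp
  ultimately show False using fresh by auto
qed

definition isolated_in :: "'a set set \<Rightarrow> 'a set \<Rightarrow> bool" where
  "isolated_in F x \<longleftrightarrow> (\<forall>y\<in>F. y \<noteq> x \<longrightarrow> y \<inter> x = {})"

definition removal_isolates :: "'a set set \<Rightarrow> 'a set \<Rightarrow> bool" where
  "removal_isolates F f \<longleftrightarrow> (\<exists>g\<in>F. g \<noteq> f \<and> g \<inter> f \<noteq> {} \<and> isolated_in (F - {f}) g)"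

definition P3_component :: "'a set set \<Rightarrow> 'a \<Rightarrow> 'a \<Rightarrow> 'a \<Rightarrow> bool" where
  "P3_component F a w b \<longleftrightarrow> a \<noteq> b \<and> w \<noteq> a \<and> w \<noteq> b \<and> {a, w} \<in> F \<and> {w, b} \<in> F \<and>
     (\<forall>h\<in>F. h \<inter> {a, w, b} \<noteq> {} \<longrightarrow> h = {a, w} \<or> h = {w, b})"

lemma isolated_inD: "isolated_in F x \<Longrightarrow> y \<in> F \<Longrightarrow> y \<noteq> x \<Longrightarrow> y \<inter> x = {}"
  unfolding isolated_in_def by blast

lemma has_isolated_edge_iff: "has_isolated_edge F \<longleftrightarrow> (\<exists>x\<in>F. isolated_in F x)"
  unfolding has_isolated_edge_def isolated_in_def by blast

lemma P3_component_swap: "P3_component F a w b \<Longrightarrow> P3_component F b w a"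
  unfolding P3_component_def by (auto simp: insert_commute)

lemma removal_isolates_path_end:
  assumes uvx: "u \<noteq> v" "v \<noteq> x" "u \<noteq> x"
    and path: "{u, v} \<in> F" "{v, x} \<in> F"
    and crit: "\<forall>f\<in>F. u \<in> f \<longrightarrow> removal_isolates F f"
  shows "\<forall>h\<in>F. h \<inter> {v, x} \<noteq> {} \<longrightarrow> h = {u, v} \<or> h = {v, x}"
proof -
  obtain g where g: "g \<in> F" "g \<noteq> {u, v}" "g \<inter> {u, v} \<noteq> {}"
    and g_isolated: "isolated_in (F - {{u, v}}) g"
  proof -
    have "removal_isolates F {u, v}" using crit path(1) by simp
    then show ?thesis using that unfolding removal_isolates_def by blast
  qed
  have "v \<in> g"
  proof (rule ccontr)
    assume v: "v \<notin> g"
    then have "u \<in> g" using g(3) by blast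
    then have "removal_isolates F g" using crit g(1) by simp
    then obtain g' where g': "g' \<in> F" "g' \<noteq> g" "g' \<inter> g \<noteq> {}"
      and g'_isolated: "isolated_in (F - {g}) g'"
      unfolding removal_isolates_def by blast
    have g'_eq: "g' = {u, v}"
    proof (rule ccontr)
      assume "g' \<noteq> {u, v}"
      then have "g' \<inter> g = {}" using g'(1,2) by (intro isolated_inD[OF g_isolated]) simp_all
      then show False using g'(3) by blast
    qed
    have "{v, x} \<in> F - {g}" using path(2) v by blast
    moreover have "{v, x} \<noteq> g'" using uvx g'_eq by (simp add: doubleton_eq_iff)
    ultimately have "{v, x} \<inter> g' = {}" by (rule isolated_inD[OF g'_isolated])
    then show False using g'_eq by auto
  qed
  have "g = {v, x}"
  proof (rule ccontr)
    assume "g \<noteq> {v, x}"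
    moreover have "{v, x} \<in> F - {{u, v}}" using path(2) uvx by (simp add: doubleton_eq_iff)
    ultimately have "{v, x} \<inter> g = {}" by (intro isolated_inD[OF g_isolated]) auto
    with \<open>v \<in> g\<close> show False by blast
  qed
  then show ?thesis using g_isolated unfolding isolated_in_def by blast
qed

lemma P3_component_if_removal_isolates:
  assumes uvx: "u \<noteq> v" "v \<noteq> x" "u \<noteq> x"
    and path: "{u, v} \<in> F" "{v, x} \<in> F"
    and crit_u: "\<forall>f\<in>F. u \<in> f \<longrightarrow> removal_isolates F f"
    and crit_x: "\<forall>f\<in>F. x \<in> f \<longrightarrow> removal_isolates F f"
  shows "P3_component F u v x"
proof -
  have near_x: "\<forall>h\<in>F. h \<inter> {v, x} \<noteq> {} \<longrightarrow> h = {u, v} \<or> h = {v, x}"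
    by (rule removal_isolates_path_end[OF uvx path crit_u])
  have "\<forall>h\<in>F. h \<inter> {v, u} \<noteq> {} \<longrightarrow> h = {x, v} \<or> h = {v, u}"
    by (rule removal_isolates_path_end) (use uvx path crit_x in \<open>simp_all add: insert_commute\<close>)
  then have near_u: "\<forall>h\<in>F. h \<inter> {u, v} \<noteq> {} \<longrightarrow> h = {u, v} \<or> h = {v, x}"
    by (simp add: insert_commute disj_commute)
  have near: "\<forall>h\<in>F. h \<inter> {u, v, x} \<noteq> {} \<longrightarrow> h = {u, v} \<or> h = {v, x}"
  proof (intro ballI impI)
    fix h assume h: "h \<in> F" "h \<inter> {u, v, x} \<noteq> {}"
    then consider "h \<inter> {u, v} \<noteq> {}" | "h \<inter> {v, x} \<noteq> {}" by blast
    then show "h = {u, v} \<or> h = {v, x}"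
      by cases (use near_u[rule_format, OF h(1)] near_x[rule_format, OF h(1)] in simp_all)
  qed
  show ?thesis unfolding P3_component_def by (intro conjI near path) (use uvx in auto)
qed

lemma P3_component_if_cycle_insert:
  assumes F: "is_forest F" and cycle: "\<not> is_forest (insert {a, b} F)"
    and crit: "\<forall>f\<in>F. f \<inter> {a, b} \<noteq> {} \<longrightarrow> removal_isolates F f"
  shows "\<exists>w. P3_component F a w b"
proof -
  obtain ws where len: "length ws \<ge> 3" and path: "is_path F ws"
    and ends: "{ws ! 0, ws ! (length ws - 1)} = {a, b}"
    by (rule path_of_cycle_insert[OF F cycle])
  have dist: "distinct ws" and edge: "\<And>k. Suc k < length ws \<Longrightarrow> {ws ! k, ws ! Suc k} \<in> F"
    using path unfolding is_path_def by auto
  have idx: "0 < length ws" "1 < length ws" "2 < length ws" using len by linarith+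
  let ?u = "ws ! 0" and ?v = "ws ! 1" and ?x = "ws ! 2"
  have uvx: "?u \<noteq> ?v" "?v \<noteq> ?x" "?u \<noteq> ?x"
    using dist idx by (simp_all add: nth_eq_iff_index_eq)
  have uv: "{?u, ?v} \<in> F" and vx: "{?v, ?x} \<in> F"
    using edge[of 0] edge[of 1] idx by (simp_all add: numeral_2_eq_2)
  have crit_at: "\<forall>f\<in>F. y \<in> f \<longrightarrow> removal_isolates F f" if "y \<in> {a, b}" for y
    using crit that by blast
  have u_end: "?u \<in> {a, b}" using ends by (metis insertI1)
  have len3: "length ws = 3"
  proof (rule ccontr)
    assume "length ws \<noteq> 3"
    then have idx3: "3 < length ws" using len by simp
    then have "{?x, ws ! 3} \<in> F" using edge[of 2] by (simp add: numeral_3_eq_3 numeral_2_eq_2)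
    then have "{?x, ws ! 3} = {?u, ?v} \<or> {?x, ws ! 3} = {?v, ?x}"
      using removal_isolates_path_end[OF uvx uv vx crit_at[OF u_end]] by simp
    then show False
      using distinct_nth_doubleton_eq[OF dist, of 2 3 0 1] distinct_nth_doubleton_eq[OF dist, of 2 3 1 2]
        idx idx3 by auto
  qed
  then have ends': "{?u, ?x} = {a, b}" using ends by (simp add: numeral_2_eq_2)
  then have "?x \<in> {a, b}" by (metis insertI1 insert_commute)
  then have "P3_component F ?u ?v ?x"
    using P3_component_if_removal_isolates[OF uvx uv vx] crit_at u_end by blast
  moreover consider "?u = a" "?x = b" | "?u = b" "?x = a"
    using ends' uvx(3) by (auto simp: doubleton_eq_iff)
  ultimately show ?thesis using P3_component_swap by metis
qed

definition colour_class :: "'b set \<Rightarrow> ('b \<Rightarrow> nat) \<Rightarrow> nat \<Rightarrow> 'b set" where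
  "colour_class E c i = {e\<in>E. c e = i}"

definition forest_colouring :: "'a set set \<Rightarrow> nat \<Rightarrow> ('a set \<Rightarrow> nat) \<Rightarrow> bool" where
  "forest_colouring E k c \<longleftrightarrow> (\<forall>e\<in>E. c e < k) \<and> (\<forall>i<k. is_forest (colour_class E c i))"

definition isolated_edges :: "'a set set \<Rightarrow> ('a set \<Rightarrow> nat) \<Rightarrow> 'a set set" where
  "isolated_edges E c = {x\<in>E. isolated_in (colour_class E c (c x)) x}"

definition isolation_removable :: "'a set set \<Rightarrow> nat \<Rightarrow> ('a set \<Rightarrow> nat) \<Rightarrow> 'a set \<Rightarrow> bool" where
  "isolation_removable E k c e \<longleftrightarrow>
     (\<exists>c'. forest_colouring E k c' \<and> isolated_edges E c' \<subseteq> isolated_edges E c - {e})"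

lemma arboricity_eq_Least: "arboricity E = (LEAST k. \<exists>c. forest_colouring E k c)"
  unfolding arboricity_def forest_colouring_def colour_class_def ..

lemma forest_colouring_arboricity:
  assumes "finite E"
  shows "\<exists>c. forest_colouring E (arboricity E) c"
proof -
  obtain h where h: "bij_betw h E {0..<card E}"
    using ex_bij_betw_finite_nat[OF assms] by blast
  have "forest_colouring E (card E) h"
    unfolding forest_colouring_def
  proof (intro conjI allI impI ballI)
    fix e assume "e \<in> E"
    then show "h e < card E" using h by (auto simp: bij_betw_def)
  next
    fix i
    show "is_forest (colour_class E h i)"
      by (rule is_forest_subsingleton) (use h in \<open>auto simp: colour_class_def bij_betw_def inj_on_def\<close>)
  qed
  then have "\<exists>k c. forest_colouring E k c" by blast
  then show ?thesis unfolding arboricity_eq_Least by (rule LeastI_ex)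
qed

lemma mem_isolated_edges:
  "x \<in> isolated_edges E c \<longleftrightarrow> x \<in> E \<and> (\<forall>y\<in>E. c y = c x \<longrightarrow> y \<noteq> x \<longrightarrow> y \<inter> x = {})"
  unfolding isolated_edges_def isolated_in_def colour_class_def by auto

lemma not_mem_isolated_edges:
  "y \<in> E \<Longrightarrow> c y = c x \<Longrightarrow> y \<noteq> x \<Longrightarrow> y \<inter> x \<noteq> {} \<Longrightarrow> x \<notin> isolated_edges E c"
  unfolding mem_isolated_edges by blast

lemma isolated_edges_if_has_isolated_edge:
  assumes "has_isolated_edge (colour_class E c i)"
  shows "isolated_edges E c \<noteq> {}"
proof -
  obtain x where "x \<in> colour_class E c i" "isolated_in (colour_class E c i) x"
    using assms unfolding has_isolated_edge_iff by blast
  then have "x \<in> isolated_edges E c" unfolding isolated_edges_def colour_class_def by simp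
  then show ?thesis by blast
qed

lemma colour_class_fun_upd_same:
  "f \<in> E \<Longrightarrow> colour_class E (c(f := l)) l = insert f (colour_class E c l)"
  unfolding colour_class_def by auto

lemma colour_class_fun_upd_other:
  "i \<noteq> l \<Longrightarrow> colour_class E (c(f := l)) i = colour_class E c i - {f}"
  unfolding colour_class_def by auto

lemma forest_colouring_recolour:
  assumes c: "forest_colouring E k c" and c': "\<forall>e\<in>E. c' e < k"
    and classes: "\<And>i. i < k \<Longrightarrow>
      is_forest (colour_class E c' i) \<or> colour_class E c' i \<subseteq> colour_class E c i"
  shows "forest_colouring E k c'"
  using c c' classes is_forest_subset unfolding forest_colouring_def by metis

lemma isolated_edges_fun_upd:
  assumes x: "x \<in> isolated_edges E (c(f := l))" "x \<noteq> f"
  shows "x \<in> isolated_edges E c \<or>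
    (f \<in> colour_class E c (c x) \<and> f \<inter> x \<noteq> {} \<and> isolated_in (colour_class E c (c x) - {f}) x)"
proof -
  have xE: "x \<in> E"
    and x_isolated: "\<forall>y\<in>E. (c(f := l)) y = c x \<longrightarrow> y \<noteq> x \<longrightarrow> y \<inter> x = {}"
    using x unfolding mem_isolated_edges by auto
  have "isolated_in (colour_class E c (c x) - {f}) x"
    using x_isolated unfolding isolated_in_def colour_class_def by auto
  moreover have "y = f" if "y \<in> E" "c y = c x" "y \<noteq> x" "y \<inter> x \<noteq> {}" for y
  proof (rule ccontr)
    assume "y \<noteq> f"
    then show False using x_isolated[rule_format, OF that(1)] that(2-4) by simp
  qed
  ultimately show ?thesis using xE unfolding mem_isolated_edges colour_class_def by blast
qed

lemma is_forest_insert_at_isolated: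
  assumes F: "is_forest F" and ab: "{a, b} \<in> F" "isolated_in F {a, b}" "a \<noteq> b"
  shows "is_forest (insert {a, z} F)"
proof (cases "z = b")
  case True
  then show ?thesis using F ab(1) by (simp add: insert_absorb)
next
  case False
  let ?F0 = "F - {{a, b}}"
  have fresh: "a \<notin> s" "b \<notin> s" if "s \<in> ?F0" for s
    using isolated_inD[OF ab(2), of s] that by auto
  have "is_forest (insert {a, z} ?F0)"
    by (rule is_forest_insert_pendant) (use is_forest_subset[OF F] fresh in auto)
  then have "is_forest (insert {b, a} (insert {a, z} ?F0))"
    by (rule is_forest_insert_pendant) (use fresh False ab(3) in auto)
  moreover have "insert {b, a} (insert {a, z} ?F0) = insert {a, z} F"
    using ab(1) by (auto simp: insert_commute)
  ultimately show ?thesis by simp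
qed

lemma isolation_removable_by_moving:
  assumes c: "forest_colouring E k c" and e: "e \<in> isolated_edges E c"
    and l: "l < k" "l \<noteq> c e" and forest: "is_forest (insert e (colour_class E c l))"
    and touching: "y \<in> colour_class E c l" "y \<inter> e \<noteq> {}"
  shows "isolation_removable E k c e"
proof -
  let ?c' = "c(e := l)"
  have eE: "e \<in> E" using e unfolding mem_isolated_edges by blast
  have "forest_colouring E k ?c'"
  proof (rule forest_colouring_recolour[OF c])
    show "\<forall>x\<in>E. ?c' x < k" using c l unfolding forest_colouring_def by simp
    show "is_forest (colour_class E ?c' i) \<or> colour_class E ?c' i \<subseteq> colour_class E c i" for i
      by (cases "i = l") (auto simp: colour_class_fun_upd_same colour_class_fun_upd_other eE forest)
  qed
  moreover have "isolated_edges E ?c' \<subseteq> isolated_edges E c - {e}"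
  proof
    fix x assume x: "x \<in> isolated_edges E ?c'"
    have "y \<in> E" "c y = l" using touching(1) unfolding colour_class_def by auto
    then have "e \<notin> isolated_edges E ?c'"
      using touching(2) l(2) by (intro not_mem_isolated_edges[of y]) auto
    with x have "x \<noteq> e" by blast
    then have "\<not> (e \<in> colour_class E c (c x) \<and> e \<inter> x \<noteq> {})"
      using e x unfolding mem_isolated_edges colour_class_def by (auto simp: Int_commute)
    with \<open>x \<noteq> e\<close> show "x \<in> isolated_edges E c - {e}" using isolated_edges_fun_upd[OF x] by blast
  qed
  ultimately show ?thesis unfolding isolation_removable_def by blast
qed

lemma isolation_removable_by_moving_neighbour:
  assumes c: "forest_colouring E k c" and e: "e \<in> isolated_edges E c" "e = {a, b}" "a \<noteq> b"
    and f: "f \<in> E" "f = {p, q}" "f \<noteq> e" "f \<inter> e \<noteq> {}"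
    and not_removal_isolates: "\<not> removal_isolates (colour_class E c (c f)) f"
  shows "isolation_removable E k c e"
proof -
  let ?c' = "c(f := c e)"
  have eE: "e \<in> E" using e unfolding mem_isolated_edges by blast
  have forest: "is_forest (insert f (colour_class E c (c e)))"
  proof -
    have ce: "is_forest (colour_class E c (c e))" "e \<in> colour_class E c (c e)"
      "isolated_in (colour_class E c (c e)) e"
      using c e(1) eE unfolding forest_colouring_def isolated_edges_def colour_class_def by auto
    obtain z where "f = {a, z} \<or> f = {b, z}" using f(2,4) e(2) by blast
    moreover have "e = {b, a}" using e(2) by (simp add: insert_commute)
    ultimately show ?thesis
      using is_forest_insert_at_isolated[OF ce(1), of a b] is_forest_insert_at_isolated[OF ce(1), of b a]
        ce(2,3) e(2,3) by metis
  qed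
  have "forest_colouring E k ?c'"
  proof (rule forest_colouring_recolour[OF c])
    show "\<forall>x\<in>E. ?c' x < k" using c eE unfolding forest_colouring_def by simp
    show "is_forest (colour_class E ?c' i) \<or> colour_class E ?c' i \<subseteq> colour_class E c i" for i
      by (cases "i = c e") (auto simp: colour_class_fun_upd_same colour_class_fun_upd_other f(1) forest)
  qed
  moreover have "isolated_edges E ?c' \<subseteq> isolated_edges E c - {e}"
  proof
    fix x assume x: "x \<in> isolated_edges E ?c'"
    have "e \<notin> isolated_edges E ?c'"
      by (rule not_mem_isolated_edges[of f]) (use f(1,3,4) in simp_all)
    moreover have "f \<notin> isolated_edges E ?c'"
      by (rule not_mem_isolated_edges[of e]) (use eE f(3,4) in \<open>auto simp: Int_commute\<close>)
    ultimately have "x \<noteq> e" "x \<noteq> f" using x by auto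
    moreover have "\<not> (f \<in> colour_class E c (c x) \<and> f \<inter> x \<noteq> {} \<and>
      isolated_in (colour_class E c (c x) - {f}) x)"
      using not_removal_isolates x \<open>x \<noteq> f\<close>
      unfolding removal_isolates_def mem_isolated_edges colour_class_def by (auto simp: Int_commute)
    ultimately show "x \<in> isolated_edges E c - {e}" using isolated_edges_fun_upd[OF x] by blast
  qed
  ultimately show ?thesis unfolding isolation_removable_def by blast
qed

lemma is_forest_insert_at_P3_component:
  assumes F: "is_forest F" and P3: "P3_component F a u b" and w: "w \<noteq> a" "w \<noteq> b" "w \<noteq> u"
  shows "is_forest (insert {a, w} F)"
proof -
  let ?F0 = "F - {{a, u}, {u, b}}"
  have aub: "a \<noteq> b" "u \<noteq> a" "u \<noteq> b" and edges: "{a, u} \<in> F" "{u, b} \<in> F"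
    and near: "\<forall>h\<in>F. h \<inter> {a, u, b} \<noteq> {} \<longrightarrow> h = {a, u} \<or> h = {u, b}"
    using P3 unfolding P3_component_def by auto
  have disjoint: "s \<inter> {a, u, b} = {}" if "s \<in> ?F0" for s
  proof (rule ccontr)
    assume "s \<inter> {a, u, b} \<noteq> {}"
    moreover have "s \<in> F" using that by blast
    ultimately have "s = {a, u} \<or> s = {u, b}" using near by blast
    then show False using that by blast
  qed
  have fresh: "a \<notin> s" "u \<notin> s" "b \<notin> s" if "s \<in> ?F0" for s
    using disjoint[OF that] by auto
  have "is_forest (insert {a, w} ?F0)"
    by (rule is_forest_insert_pendant) (use is_forest_subset[OF F] fresh in auto)
  then have "is_forest (insert {u, a} (insert {a, w} ?F0))"
    by (rule is_forest_insert_pendant) (use fresh aub w in auto)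
  then have "is_forest (insert {b, u} (insert {u, a} (insert {a, w} ?F0)))"
    by (rule is_forest_insert_pendant) (use fresh aub w in auto)
  moreover have "insert {b, u} (insert {u, a} (insert {a, w} ?F0)) = insert {a, w} F"
    using edges by (auto simp: insert_commute)
  ultimately show ?thesis by simp
qed

lemma isolated_edges_swap:
  assumes e: "e \<in> isolated_edges E c" "e = {a, b}"
    and P3: "P3_component (colour_class E c j) a w b"
    and touching: "y \<in> colour_class E c l" "y \<noteq> e" "y \<noteq> {a, w}" "y \<inter> {a, w} \<noteq> {}"
  shows "isolated_edges E (c(e := j, {a, w} := l)) \<subseteq> isolated_edges E c - {e}"
proof
  define r where "r = {a, w}"
  define s where "s = {w, b}"
  let ?c' = "c(e := j, r := l)"
  fix x assume x: "x \<in> isolated_edges E ?c'"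
  have abw: "a \<noteq> b" "w \<noteq> a" "w \<noteq> b" and rs: "r \<in> E" "c r = j" "s \<in> E" "c s = j"
    and near: "\<forall>h\<in>colour_class E c j. h \<inter> {a, w, b} \<noteq> {} \<longrightarrow> h = r \<or> h = s"
    using P3 unfolding P3_component_def colour_class_def r_def s_def by auto
  have eE: "e \<in> E" using e(1) unfolding mem_isolated_edges by blast
  have y: "y \<in> E" "c y = l" using touching(1) unfolding colour_class_def by auto
  have ne: "r \<noteq> e" "s \<noteq> e" "s \<noteq> r" and meet: "s \<inter> e \<noteq> {}" "y \<inter> r \<noteq> {}"
    using abw e(2) touching(4) unfolding r_def s_def by (auto simp: doubleton_eq_iff)
  have "e \<notin> isolated_edges E ?c'"
    by (rule not_mem_isolated_edges[of s]) (use rs ne meet in simp_all)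
  moreover have "r \<notin> isolated_edges E ?c'"
    by (rule not_mem_isolated_edges[of y]) (use y touching(2,3) meet r_def in simp_all)
  moreover have "s \<notin> isolated_edges E ?c'"
    by (rule not_mem_isolated_edges[of e]) (use eE rs ne meet in \<open>auto simp: Int_commute\<close>)
  ultimately have x_ne: "x \<noteq> e" "x \<noteq> r" "x \<noteq> s" using x r_def by auto
  have xE: "x \<in> E" and x_isolated: "\<forall>z\<in>E. ?c' z = c x \<longrightarrow> z \<noteq> x \<longrightarrow> z \<inter> x = {}"
    using x x_ne r_def unfolding mem_isolated_edges by auto
  have "z \<inter> x = {}" if z: "z \<in> E" "c z = c x" "z \<noteq> x" for z
  proof -
    consider "z = e" | "z = r" | "z \<noteq> e" "z \<noteq> r" by blast
    then show ?thesis
    proof cases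
      case 1
      then show ?thesis using e(1) xE z x_ne unfolding mem_isolated_edges by (auto simp: Int_commute)
    next
      case 2
      then have "x \<in> colour_class E c j" using xE z rs unfolding colour_class_def by simp
      show ?thesis
      proof (rule ccontr)
        assume "z \<inter> x \<noteq> {}"
        then have "x \<inter> {a, w, b} \<noteq> {}" using 2 unfolding r_def by blast
        then have "x = r \<or> x = s" using near \<open>x \<in> colour_class E c j\<close> by blast
        then show False using x_ne by blast
      qed
    next
      case 3
      then show ?thesis using x_isolated z by simp
    qed
  qed
  then show "x \<in> isolated_edges E c - {e}" using xE x_ne by (simp add: mem_isolated_edges)
qed

lemma isolation_removable_by_swapping:
  assumes c: "forest_colouring E k c" and e: "e \<in> isolated_edges E c" "e = {a, b}"
    and P3: "P3_component (colour_class E c j) a w b"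
    and l: "l < k" "l \<noteq> j" and forest_l: "is_forest (insert {a, w} (colour_class E c l - {e}))"
    and touching: "y \<in> colour_class E c l" "y \<noteq> e" "y \<noteq> {a, w}" "y \<inter> {a, w} \<noteq> {}"
  shows "isolation_removable E k c e"
proof -
  let ?c' = "c(e := j, {a, w} := l)"
  have abw: "a \<noteq> b" "w \<noteq> a" "w \<noteq> b" and aw: "{a, w} \<in> E" "c {a, w} = j"
    and near: "\<forall>h\<in>colour_class E c j. h \<inter> {a, w, b} \<noteq> {} \<longrightarrow> h = {a, w} \<or> h = {w, b}"
    using P3 unfolding P3_component_def colour_class_def by auto
  have eE: "e \<in> E" using e(1) unfolding mem_isolated_edges by blast
  have ne: "{a, w} \<noteq> e" using abw e(2) by (auto simp: doubleton_eq_iff)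
  have j: "j < k" using c aw unfolding forest_colouring_def by auto
  have class_l: "colour_class E ?c' l = insert {a, w} (colour_class E c l - {e})"
    using aw(1) l(2) eE unfolding colour_class_def by auto
  have class_j: "colour_class E ?c' j = insert e (colour_class E c j - {{a, w}})"
    using ne l(2) eE unfolding colour_class_def by auto
  have forest_j: "is_forest (insert e (colour_class E c j - {{a, w}}))"
  proof -
    have "is_forest (colour_class E c j - {{a, w}})"
      using c j is_forest_subset unfolding forest_colouring_def by blast
    moreover have "a \<notin> t" if "t \<in> colour_class E c j - {{a, w}}" for t
      using near that abw by auto
    ultimately show ?thesis unfolding e(2) by (intro is_forest_insert_pendant) auto
  qed
  have "forest_colouring E k ?c'"
  proof (rule forest_colouring_recolour[OF c])
    show "\<forall>x\<in>E. ?c' x < k" using c l j unfolding forest_colouring_def by simp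
    show "is_forest (colour_class E ?c' i) \<or> colour_class E ?c' i \<subseteq> colour_class E c i" for i
    proof (cases "i = l \<or> i = j")
      case True
      then show ?thesis using class_l class_j forest_l forest_j by auto
    next
      case False
      then have "colour_class E ?c' i \<subseteq> colour_class E c i" unfolding colour_class_def by auto
      then show ?thesis ..
    qed
  qed
  then show ?thesis
    using isolated_edges_swap[OF e P3 touching] unfolding isolation_removable_def by blast
qed

lemma P3_component_if_not_isolation_removable:
  assumes c: "forest_colouring E k c" and e: "e \<in> isolated_edges E c" "e = {a, b}" "a \<noteq> b"
    and edges: "\<forall>x\<in>E. \<exists>p q. x = {p, q}"
    and stuck: "\<not> isolation_removable E k c e"
    and l: "l \<noteq> c e" and touching: "y \<in> colour_class E c l" "y \<inter> e \<noteq> {}"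
  shows "\<exists>w. P3_component (colour_class E c l) a w b"
proof -
  have lk: "l < k" using c touching(1) unfolding forest_colouring_def colour_class_def by auto
  then have "is_forest (colour_class E c l)" using c unfolding forest_colouring_def by blast
  moreover have "\<not> is_forest (insert {a, b} (colour_class E c l))"
    using isolation_removable_by_moving[OF c e(1) lk l _ touching] stuck e(2) by blast
  moreover have "\<forall>f\<in>colour_class E c l. f \<inter> {a, b} \<noteq> {} \<longrightarrow> removal_isolates (colour_class E c l) f"
  proof (intro ballI impI)
    fix f assume f: "f \<in> colour_class E c l" "f \<inter> {a, b} \<noteq> {}"
    then have fE: "f \<in> E" and "c f = l" unfolding colour_class_def by auto
    then have "f \<noteq> e" using l by blast
    obtain p q where "f = {p, q}" using edges fE by blast
    then show "removal_isolates (colour_class E c l) f"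
      using isolation_removable_by_moving_neighbour[OF c e fE _ \<open>f \<noteq> e\<close>] f(2) e(2) stuck \<open>c f = l\<close>
      by blast
  qed
  ultimately show ?thesis by (rule P3_component_if_cycle_insert)
qed

lemma swap_target_if_not_isolation_removable:
  assumes c: "forest_colouring E k c" and e: "e \<in> isolated_edges E c" "e = {a, b}" "a \<noteq> b"
    and edges: "\<forall>x\<in>E. \<exists>p q. x = {p, q}"
    and stuck: "\<not> isolation_removable E k c e"
    and w: "w \<noteq> a" "w \<noteq> b" "{a, w} \<notin> colour_class E c l"
    and h: "h \<in> colour_class E c l" "h \<inter> {a, w, b} \<noteq> {}" "\<not> h \<subseteq> {a, w, b}"
  shows "is_forest (insert {a, w} (colour_class E c l - {e})) \<and>
    (\<exists>y\<in>colour_class E c l. y \<noteq> e \<and> y \<noteq> {a, w} \<and> y \<inter> {a, w} \<noteq> {})"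
proof -
  have "l < k" using c h(1) unfolding forest_colouring_def colour_class_def by auto
  then have forest_l: "is_forest (colour_class E c l)" using c unfolding forest_colouring_def by blast
  show ?thesis
  proof (cases "\<exists>t\<in>colour_class E c l - {e}. t \<inter> e \<noteq> {}")
    case True
    then obtain t where t: "t \<in> colour_class E c l" "t \<noteq> e" "t \<inter> e \<noteq> {}" by blast
    then have l: "l \<noteq> c e" using not_mem_isolated_edges[of t E c e] e unfolding colour_class_def by auto
    then obtain u where P3_l: "P3_component (colour_class E c l) a u b"
      using P3_component_if_not_isolation_removable[OF c e edges stuck l t(1,3)] by blast
    then have au: "{a, u} \<in> colour_class E c l" "u \<noteq> b" unfolding P3_component_def by auto
    then have "u \<noteq> w" using w(3) by blast
    moreover have "colour_class E c l - {e} = colour_class E c l"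
      using l unfolding colour_class_def by auto
    ultimately show ?thesis
      using is_forest_insert_at_P3_component[OF forest_l P3_l w(1,2)] au e(2) w(1,2)
      by (auto simp: doubleton_eq_iff intro!: bexI[of _ "{a, u}"])
  next
    case False
    then have fresh: "a \<notin> t" "b \<notin> t" if "t \<in> colour_class E c l - {e}" for t
      using that e(2) by blast+
    have "is_forest (insert {a, w} (colour_class E c l - {e}))"
      using fresh is_forest_subset[OF forest_l] by (intro is_forest_insert_pendant) auto
    moreover have "h \<noteq> e" using h(3) e(2) by auto
    moreover from this have "a \<notin> h" "w \<in> h" using fresh h(1,2) by auto
    ultimately show ?thesis using h(1) by blast
  qed
qed

lemma isolation_removable_if_no_isolated_K2_K3:
  assumes edges: "\<forall>x\<in>E. \<exists>p q. p \<noteq> q \<and> x = {p, q}"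
    and no_K2: "\<not> has_isolated_edge E" and no_K3: "\<not> has_isolated_triangle E"
    and c: "forest_colouring E k c" and e: "e \<in> isolated_edges E c"
  shows "isolation_removable E k c e"
proof (rule ccontr)
  assume stuck: "\<not> isolation_removable E k c e"
  have eE: "e \<in> E" using e unfolding mem_isolated_edges by blast
  then obtain a b where ab: "e = {a, b}" "a \<noteq> b" using edges by blast
  have edges': "\<forall>x\<in>E. \<exists>p q. x = {p, q}" using edges by blast
  obtain y where y: "y \<in> E" "y \<noteq> e" "y \<inter> e \<noteq> {}"
    using no_K2 eE unfolding has_isolated_edge_def by blast
  define j where "j = c y"
  have "j \<noteq> c e" using not_mem_isolated_edges[of y E c e] y e unfolding j_def by blast
  then obtain w where P3_j: "P3_component (colour_class E c j) a w b"
    using P3_component_if_not_isolation_removable[OF c e ab edges' stuck, of j y] y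
    unfolding j_def colour_class_def by blast
  then have abw: "w \<noteq> a" "w \<noteq> b" and aw_j: "{a, w} \<in> colour_class E c j" "{w, b} \<in> E"
    and near_j: "\<forall>h\<in>colour_class E c j. h \<inter> {a, w, b} \<noteq> {} \<longrightarrow> h = {a, w} \<or> h = {w, b}"
    unfolding P3_component_def colour_class_def by auto
  have "\<not> (\<forall>h\<in>E. h \<inter> {a, w, b} \<noteq> {} \<longrightarrow> h \<subseteq> {a, w, b})"
  proof
    assume "\<forall>h\<in>E. h \<inter> {a, w, b} \<noteq> {} \<longrightarrow> h \<subseteq> {a, w, b}"
    then have "has_isolated_triangle E"
      unfolding has_isolated_triangle_def using eE ab aw_j abw unfolding colour_class_def
      by (intro exI[of _ a] exI[of _ w] exI[of _ b]) simp
    with no_K3 show False ..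
  qed
  then obtain h where h: "h \<in> E" "h \<inter> {a, w, b} \<noteq> {}" "\<not> h \<subseteq> {a, w, b}" by blast
  define l where "l = c h"
  have "h \<notin> colour_class E c j" using near_j h(2,3) by blast
  then have l: "l \<noteq> j" "l < k" using h(1) c unfolding l_def colour_class_def forest_colouring_def by auto
  then have "{a, w} \<notin> colour_class E c l" using aw_j unfolding colour_class_def by auto
  moreover have "h \<in> colour_class E c l" using h(1) unfolding l_def colour_class_def by simp
  ultimately have "is_forest (insert {a, w} (colour_class E c l - {e})) \<and>
    (\<exists>y\<in>colour_class E c l. y \<noteq> e \<and> y \<noteq> {a, w} \<and> y \<inter> {a, w} \<noteq> {})"
    using swap_target_if_not_isolation_removable[OF c e ab edges' stuck abw] h(2,3) by blast
  then show False
    using isolation_removable_by_swapping[OF c e ab(1) P3_j l(2,1)] stuck by blast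
qed

lemma forest_colouring_without_isolated_edges:
  assumes "finite E" and edges: "\<forall>x\<in>E. \<exists>p q. p \<noteq> q \<and> x = {p, q}"
    and "\<not> has_isolated_edge E" "\<not> has_isolated_triangle E"
  shows "\<exists>c. forest_colouring E (arboricity E) c \<and> isolated_edges E c = {}"
proof -
  let ?k = "arboricity E"
  obtain c0 where "forest_colouring E ?k c0" using forest_colouring_arboricity[OF assms(1)] by blast
  then obtain c where c: "forest_colouring E ?k c"
    and min: "\<And>c'. forest_colouring E ?k c' \<Longrightarrow> card (isolated_edges E c) \<le> card (isolated_edges E c')"
    using ex_has_least_nat[of "forest_colouring E ?k" c0 "\<lambda>c. card (isolated_edges E c)"] by blast
  have "isolated_edges E c = {}"
  proof (rule ccontr)
    assume "isolated_edges E c \<noteq> {}"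
    then obtain e where e: "e \<in> isolated_edges E c" by blast
    then obtain c' where c': "forest_colouring E ?k c'" "isolated_edges E c' \<subseteq> isolated_edges E c - {e}"
      using isolation_removable_if_no_isolated_K2_K3[OF edges assms(3,4) c]
      unfolding isolation_removable_def by blast
    have fin: "finite (isolated_edges E c)" using assms(1) unfolding isolated_edges_def by simp
    have "card (isolated_edges E c') \<le> card (isolated_edges E c - {e})"
      using c'(2) fin by (intro card_mono) auto
    also have "\<dots> < card (isolated_edges E c)" by (rule card_Diff1_less[OF fin e])
    finally show False using min[OF c'(1)] by simp
  qed
  with c show ?thesis by blast
qed

theorem lemma1:
  fixes V :: "'a set" and E :: "'a set set"
  assumes "simple_graph V E"
    and "\<not> has_isolated_edge E"
    and "\<not> has_isolated_triangle E"
  shows "\<exists>c :: 'a set \<Rightarrow> nat. (\<forall>e\<in>E. c e < arboricity E) \<and>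
           (\<forall>i < arboricity E. is_forest {e\<in>E. c e = i} \<and>
                                \<not> has_isolated_edge {e\<in>E. c e = i})"
proof -
  have edges: "\<forall>x\<in>E. \<exists>p q. p \<noteq> q \<and> x = {p, q}"
    using assms(1) unfolding simple_graph_def by blast
  have "E \<subseteq> Pow V" "finite V" using assms(1) unfolding simple_graph_def by fastforce+
  then have "finite E" by (meson finite_Pow_iff finite_subset)
  then obtain c where "forest_colouring E (arboricity E) c" "isolated_edges E c = {}"
    using forest_colouring_without_isolated_edges edges assms(2,3) by blast
  then show ?thesis
    using isolated_edges_if_has_isolated_edge unfolding forest_colouring_def colour_class_def by blast
qed

end
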